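(* Let $G$ be a sofic group and $D$ a division ring. Then the group ring $D(G)$ is stably finite, i.e. for every $n\ge1$ the matrix ring $\mathrm{Mat}_{n\times n}(D(G))$ is directly finite: whenever $a,b\in \mathrm{Mat}_{n\times n}(D(G))$ satisfy $ab=1$, then $ba=1$. *)

theory Defs
  imports "HOL-Library.Poly_Mapping" "HOL-Combinatorics.Permutations" "Jordan_Normal_Form.Matrix"
begin

text \<open>Groups are represented as types of class group_add (additive notation, NOT assumed
commutative): the group operation is +, the neutral element 0.
The group ring D(G) is the type of finitely supported functions G to D with
convolution product (Poly_Mapping), which is a ring_1 when G is a monoid and D a ring_1.\<close>

definition hamming_dist :: "nat \<Rightarrow> (nat \<Rightarrow> nat) \<Rightarrow> (nat \<Rightarrow> nat) \<Rightarrow> real" where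
  "hamming_dist m \<sigma> \<tau> = real (card {i \<in> {..<m}. \<sigma> i \<noteq> \<tau> i}) / real m"

definition sofic :: "'g::group_add itself \<Rightarrow> bool" where
  "sofic _ \<longleftrightarrow>
     (\<forall>(F::'g set) (\<epsilon>::real). finite F \<and> \<epsilon> > 0 \<longrightarrow>
        (\<exists>m::nat. m > 0 \<and> (\<exists>\<sigma>::'g \<Rightarrow> nat \<Rightarrow> nat.
           (\<forall>g. \<sigma> g permutes {..<m}) \<and>
           (\<forall>g\<in>F. \<forall>h\<in>F. hamming_dist m (\<sigma> (g + h)) (\<sigma> g \<circ> \<sigma> h) < \<epsilon>) \<and>
           (\<forall>g\<in>F. g \<noteq> 0 \<longrightarrow> hamming_dist m (\<sigma> g) id > 1 - \<epsilon>))))"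

end

theory Submission
  imports Defs
begin

text \<open>
  If \<open>A B = 1\<close> then \<open>X = 1 - B A\<close> satisfies \<open>A X = 0\<close>, so it suffices to show that a right
  invertible matrix \<open>A\<close> over \<open>D(G)\<close> has no nonzero right annihilator \<open>X\<close>. A sofic approximation
  \<open>\<sigma>\<close> of \<open>G\<close> on \<open>m\<close> points turns every element \<open>\<Sum> x\<^sub>g g\<close> of \<open>D(G)\<close> into the \<open>m \<times> m\<close> matrix
  \<open>\<Sum> x\<^sub>g P(\<sigma> g)\<close> over \<open>D\<close>, and this is multiplicative on all but a small proportion of the
  points. Among the vectors of length \<open>n m\<close> over \<open>D\<close>, the columns of the image of \<open>B\<close> at the
  good points are sent by the image of \<open>A\<close> to distinct unit vectors (as \<open>A B = 1\<close>), while the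
  columns of the image of \<open>X\<close> at a well separated set \<open>Q\<close> of good points are killed by it
  (as \<open>A X = 0\<close>) and are independent, each having a private nonzero coordinate. Hence \<open>n \<cdot> |Good| + |Q| \<le> n m\<close>, although \<open>|Q|\<close> is
  proportional to \<open>m\<close> while the number \<open>m - |Good|\<close> of bad points can be made smaller than
  \<open>|Q| / n\<close>.
\<close>

section \<open>Linear independence over a division ring\<close>

definition independent_columns :: "'c set \<Rightarrow> 'k set \<Rightarrow> ('k \<Rightarrow> 'c \<Rightarrow> 'd::division_ring) \<Rightarrow> bool"
  where "independent_columns C K v \<longleftrightarrow>
    (\<forall>w. (\<forall>c\<in>C. (\<Sum>k\<in>K. v k c * w k) = 0) \<longrightarrow> (\<forall>k\<in>K. w k = 0))"

lemma independent_columnsD: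
  "independent_columns C K v \<Longrightarrow> (\<And>c. c \<in> C \<Longrightarrow> (\<Sum>k\<in>K. v k c * w k) = 0) \<Longrightarrow> k \<in> K
    \<Longrightarrow> w k = 0"
  unfolding independent_columns_def by blast

lemma independent_columns_card_le:
  assumes "finite C" "finite K" "independent_columns C K v"
  shows "card K \<le> card C"
  using assms
proof (induction C arbitrary: K v rule: finite_induct)
  case empty
  have "K = {}"
    using independent_columnsD[OF empty.prems(2), of "\<lambda>_. 1"] by auto
  then show ?case by simp
next
  case (insert c0 C)
  show ?case
  proof (cases "\<forall>k\<in>K. v k c0 = 0")
    case True
    then have "independent_columns C K v"
      using insert.prems(2) by (auto simp: independent_columns_def)
    with insert.IH insert.prems(1) insert.hyps show ?thesis by fastforce
  next
    case False
    then obtain k0 where k0: "k0 \<in> K" "v k0 c0 \<noteq> 0" by auto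
    define u where "u k c = v k c - v k0 c * (inverse (v k0 c0) * v k c0)" for k c
    have "independent_columns C (K - {k0}) u"
      unfolding independent_columns_def
    proof (intro allI impI)
      fix w assume w: "\<forall>c\<in>C. (\<Sum>k\<in>K - {k0}. u k c * w k) = 0"
      define s where "s = (\<Sum>k\<in>K - {k0}. inverse (v k0 c0) * v k c0 * w k)"
      define w' where "w' k = (if k = k0 then - s else w k)" for k
      have expand: "(\<Sum>k\<in>K. v k c * w' k) = (\<Sum>k\<in>K - {k0}. u k c * w k)" for c
      proof -
        have "(\<Sum>k\<in>K. v k c * w' k) = - (v k0 c * s) + (\<Sum>k\<in>K - {k0}. v k c * w k)"
          using k0 insert.prems(1) by (simp add: sum.remove w'_def)
        also have "\<dots> = (\<Sum>k\<in>K - {k0}. u k c * w k)"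
          by (simp add: u_def s_def algebra_simps sum_subtractf sum_distrib_left mult.assoc)
        finally show ?thesis .
      qed
      have "u k c0 = 0" for k
        using k0 by (simp add: u_def mult.assoc[symmetric])
      then have "\<forall>c\<in>insert c0 C. (\<Sum>k\<in>K. v k c * w' k) = 0"
        using w by (simp add: expand)
      then have "\<forall>k\<in>K. w' k = 0"
        using insert.prems(2) by (simp add: independent_columns_def)
      then show "\<forall>k\<in>K - {k0}. w k = 0"
        by (metis DiffE insertI1 w'_def)
    qed
    then have "card (K - {k0}) \<le> card C"
      using insert.IH insert.prems(1) by blast
    then show ?thesis
      using k0 insert.prems(1) insert.hyps by simp
  qed
qed

lemma independent_columns_diagonal:
  assumes "finite K"
    and "\<And>k. k \<in> K \<Longrightarrow> \<exists>c\<in>C. v k c \<noteq> 0 \<and> (\<forall>k'\<in>K. k' \<noteq> k \<longrightarrow> v k' c = 0)"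
  shows "independent_columns C K v"
  unfolding independent_columns_def
proof (intro allI impI ballI)
  fix w k assume w: "\<forall>c\<in>C. (\<Sum>k\<in>K. v k c * w k) = 0" and "k \<in> K"
  then obtain c where c: "c \<in> C" "v k c \<noteq> 0" "\<forall>k'\<in>K. k' \<noteq> k \<longrightarrow> v k' c = 0"
    using assms(2) by blast
  have "(\<Sum>k'\<in>K. v k' c * w k') = v k c * w k"
    using \<open>k \<in> K\<close> c(3) assms(1) by (simp add: sum.remove[of K k] sum.neutral)
  with w c show "w k = 0" by simp
qed

lemma independent_columns_Un:
  assumes "finite C" "finite K1" "finite K2" "K1 \<inter> K2 = {}"
    and image_indep: "independent_columns R K1 (\<lambda>k r. \<Sum>c\<in>C. a r c * v k c)"
    and image_zero: "\<And>k r. k \<in> K2 \<Longrightarrow> r \<in> R \<Longrightarrow> (\<Sum>c\<in>C. a r c * v k c) = 0"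
    and indep2: "independent_columns C K2 v"
  shows "independent_columns C (K1 \<union> K2) v"
  unfolding independent_columns_def
proof (intro allI impI)
  fix w assume w: "\<forall>c\<in>C. (\<Sum>k\<in>K1 \<union> K2. v k c * w k) = 0"
  have "(\<Sum>k\<in>K1. (\<Sum>c\<in>C. a r c * v k c) * w k) = 0" if "r \<in> R" for r
  proof -
    have "0 = (\<Sum>c\<in>C. a r c * (\<Sum>k\<in>K1 \<union> K2. v k c * w k))"
      using w by simp
    also have "\<dots> = (\<Sum>k\<in>K1 \<union> K2. (\<Sum>c\<in>C. a r c * v k c) * w k)"
      by (simp add: sum_distrib_left sum_distrib_right mult.assoc sum.swap[of _ C])
    also have "\<dots> = (\<Sum>k\<in>K1. (\<Sum>c\<in>C. a r c * v k c) * w k)"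
      using assms(2-4) image_zero[OF _ that] by (simp add: sum.union_disjoint)
    finally show ?thesis by simp
  qed
  then have w1: "\<forall>k\<in>K1. w k = 0"
    using image_indep by (auto simp: independent_columns_def)
  then have "\<forall>c\<in>C. (\<Sum>k\<in>K2. v k c * w k) = 0"
    using w assms(2-4) by (simp add: sum.union_disjoint)
  then have "\<forall>k\<in>K2. w k = 0"
    using indep2 by (simp add: independent_columns_def)
  with w1 show "\<forall>k\<in>K1 \<union> K2. w k = 0" by blast
qed

section \<open>Group ring elements as matrices over the coefficient ring\<close>

lemma sum_single_lookup: "(\<Sum>g\<in>Poly_Mapping.keys x. Poly_Mapping.single g (Poly_Mapping.lookup x g)) = x"
  by (rule poly_mapping_eqI)
     (simp add: lookup_sum lookup_single when_def in_keys_iff flip: sum.inter_filter)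

text \<open>\<open>x = \<Sum> x\<^sub>g g\<close> acts on \<open>D\<^sup>m\<close> as \<open>\<Sum> x\<^sub>g P(\<sigma> g)\<close>, where \<open>P(\<pi>)\<close> is the permutation matrix mapping the
  basis vector \<open>e q\<close> to \<open>e (\<pi> q)\<close>; \<open>perm_rep \<sigma> x p q\<close> is its entry at \<open>(p, q)\<close>.\<close>

definition perm_rep :: "('g \<Rightarrow> nat \<Rightarrow> nat) \<Rightarrow> ('g \<Rightarrow>\<^sub>0 'd::comm_monoid_add) \<Rightarrow> nat \<Rightarrow> nat \<Rightarrow> 'd"
  where "perm_rep \<sigma> x p q = (\<Sum>g\<in>Poly_Mapping.keys x. Poly_Mapping.lookup x g when \<sigma> g q = p)"

lemma perm_rep_eq_sum:
  assumes "finite S" "Poly_Mapping.keys x \<subseteq> S"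
  shows "perm_rep \<sigma> x p q = (\<Sum>g\<in>S. Poly_Mapping.lookup x g when \<sigma> g q = p)"
  unfolding perm_rep_def using assms
  by (intro sum.mono_neutral_left) (auto simp: in_keys_iff)

lemma perm_rep_add: "perm_rep \<sigma> (x + y) p q = perm_rep \<sigma> x p q + perm_rep \<sigma> y p q"
proof -
  let ?S = "Poly_Mapping.keys x \<union> Poly_Mapping.keys y"
  have "Poly_Mapping.keys (x + y) \<subseteq> ?S" by (rule keys_add)
  then show ?thesis
    by (simp add: perm_rep_eq_sum[of ?S] lookup_add when_add_distrib sum.distrib)
qed

lemma perm_rep_zero [simp]: "perm_rep \<sigma> 0 p q = 0"
  by (simp add: perm_rep_def)

lemma perm_rep_sum: "perm_rep \<sigma> (sum f T) p q = (\<Sum>t\<in>T. perm_rep \<sigma> (f t) p q)"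
  by (induction T rule: infinite_finite_induct) (simp_all add: perm_rep_add)

lemma perm_rep_single: "perm_rep \<sigma> (Poly_Mapping.single g a) p q = (a when \<sigma> g q = p)"
  by (simp add: perm_rep_eq_sum[of "{g}"])

lemma perm_rep_one:
  "perm_rep \<sigma> (1 :: 'g::zero \<Rightarrow>\<^sub>0 'd::{comm_monoid_add,zero_neq_one}) p q = (1 when \<sigma> 0 q = p)"
  unfolding single_one[symmetric] by (rule perm_rep_single)

lemma perm_rep_mult:
  fixes x y :: "'g::monoid_add \<Rightarrow>\<^sub>0 'd::semiring_0"
  assumes hom: "\<And>g h. g \<in> Poly_Mapping.keys x \<Longrightarrow> h \<in> Poly_Mapping.keys y
      \<Longrightarrow> \<sigma> g (\<sigma> h q) = \<sigma> (g + h) q"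
    and range: "\<And>h. h \<in> Poly_Mapping.keys y \<Longrightarrow> \<sigma> h q < m"
  shows "(\<Sum>p<m. perm_rep \<sigma> x r p * perm_rep \<sigma> y p q) = perm_rep \<sigma> (x * y) r q"
proof -
  let ?X = "Poly_Mapping.keys x" and ?Y = "Poly_Mapping.keys y"
  let ?c = "\<lambda>g h. Poly_Mapping.lookup x g * Poly_Mapping.lookup y h"
  have "(\<Sum>p<m. perm_rep \<sigma> x r p * perm_rep \<sigma> y p q)
      = (\<Sum>p<m. \<Sum>g\<in>?X. \<Sum>h\<in>?Y. ?c g h when \<sigma> g p = r when \<sigma> h q = p)"
    by (simp add: perm_rep_eq_sum[of ?X] perm_rep_eq_sum[of ?Y] sum_product when_mult mult_when)
  also have "\<dots> = (\<Sum>g\<in>?X. \<Sum>h\<in>?Y. \<Sum>p<m. ?c g h when \<sigma> g p = r when \<sigma> h q = p)"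
    by (subst sum.swap) (rule sum.cong[OF refl], rule sum.swap)
  also have "\<dots> = (\<Sum>g\<in>?X. \<Sum>h\<in>?Y. ?c g h when \<sigma> (g + h) q = r)"
  proof (intro sum.cong refl)
    fix g h assume "g \<in> ?X" "h \<in> ?Y"
    then show "(\<Sum>p<m. ?c g h when \<sigma> g p = r when \<sigma> h q = p) = (?c g h when \<sigma> (g + h) q = r)"
      using hom range by (simp add: when_def)
  qed
  also have "\<dots> = perm_rep \<sigma> (\<Sum>g\<in>?X. \<Sum>h\<in>?Y. Poly_Mapping.single (g + h) (?c g h)) r q"
    by (simp add: perm_rep_sum perm_rep_single)
  also have "(\<Sum>g\<in>?X. \<Sum>h\<in>?Y. Poly_Mapping.single (g + h) (?c g h))
      = (\<Sum>g\<in>?X. Poly_Mapping.single g (Poly_Mapping.lookup x g))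
        * (\<Sum>h\<in>?Y. Poly_Mapping.single h (Poly_Mapping.lookup y h))"
    by (simp add: sum_product mult_single)
  also have "\<dots> = x * y"
    by (simp only: sum_single_lookup)
  finally show ?thesis .
qed

lemma perm_rep_private_point:
  assumes "g0 \<in> Poly_Mapping.keys x"
    and "\<And>g. g \<in> Poly_Mapping.keys x \<Longrightarrow> \<sigma> g q' = \<sigma> g0 q \<Longrightarrow> g = g0 \<and> q' = q"
  shows "perm_rep \<sigma> x (\<sigma> g0 q) q' = (Poly_Mapping.lookup x g0 when q' = q)"
proof -
  have "perm_rep \<sigma> x (\<sigma> g0 q) q'
      = (\<Sum>g\<in>Poly_Mapping.keys x. Poly_Mapping.lookup x g when g = g0 \<and> q' = q)"
    unfolding perm_rep_def using assms(2) by (intro sum.cong refl) (auto simp: when_def)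
  also have "\<dots> = (Poly_Mapping.lookup x g0 when q' = q)"
    using assms(1) by (simp add: when_def)
  finally show ?thesis .
qed

definition mat_perm_rep ::
    "('g \<Rightarrow> nat \<Rightarrow> nat) \<Rightarrow> ('g \<Rightarrow>\<^sub>0 'd::comm_monoid_add) mat \<Rightarrow> nat \<times> nat \<Rightarrow> nat \<times> nat \<Rightarrow> 'd"
  where "mat_perm_rep \<sigma> Y i j = perm_rep \<sigma> (Y $$ (fst i, fst j)) (snd i) (snd j)"

lemma mat_perm_rep_mult:
  fixes Y Z :: "('g::monoid_add \<Rightarrow>\<^sub>0 'd::semiring_0) mat"
  assumes "Y \<in> carrier_mat n n" "Z \<in> carrier_mat n n" "r < n" "s < n"
    and hom: "\<And>t g h. t < n \<Longrightarrow> g \<in> Poly_Mapping.keys (Y $$ (r, t))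
      \<Longrightarrow> h \<in> Poly_Mapping.keys (Z $$ (t, s)) \<Longrightarrow> \<sigma> g (\<sigma> h q) = \<sigma> (g + h) q"
    and range: "\<And>t h. t < n \<Longrightarrow> h \<in> Poly_Mapping.keys (Z $$ (t, s)) \<Longrightarrow> \<sigma> h q < m"
  shows "(\<Sum>c\<in>{..<n} \<times> {..<m}. mat_perm_rep \<sigma> Y (r, p) c * mat_perm_rep \<sigma> Z c (s, q))
    = mat_perm_rep \<sigma> (Y * Z) (r, p) (s, q)"
proof -
  have "(\<Sum>c\<in>{..<n} \<times> {..<m}. mat_perm_rep \<sigma> Y (r, p) c * mat_perm_rep \<sigma> Z c (s, q))
      = (\<Sum>t<n. \<Sum>p'<m. perm_rep \<sigma> (Y $$ (r, t)) p p' * perm_rep \<sigma> (Z $$ (t, s)) p' q)"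
    by (simp add: mat_perm_rep_def sum.cartesian_product case_prod_beta)
  also have "\<dots> = (\<Sum>t<n. perm_rep \<sigma> (Y $$ (r, t) * Z $$ (t, s)) p q)"
    using hom range by (intro sum.cong refl perm_rep_mult) auto
  also have "\<dots> = mat_perm_rep \<sigma> (Y * Z) (r, p) (s, q)"
    using assms(1-4) by (simp add: mat_perm_rep_def perm_rep_sum scalar_prod_def atLeast0LessThan)
  finally show ?thesis .
qed

lemma mat_perm_rep_one:
  assumes "r < n" "t < n" "\<sigma> 0 q = q"
  shows "mat_perm_rep \<sigma> (1\<^sub>m n :: ('g::zero \<Rightarrow>\<^sub>0 'd::ring_1) mat) (r, p) (t, q)
    = (1 when (r, p) = (t, q))"
  using assms by (simp add: mat_perm_rep_def perm_rep_one when_def)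

section \<open>Good points of a sofic approximation\<close>

definition good_point :: "'g::group_add set \<Rightarrow> ('g \<Rightarrow> nat \<Rightarrow> nat) \<Rightarrow> nat \<Rightarrow> bool"
  where "good_point F \<sigma> q \<longleftrightarrow>
    (\<forall>g\<in>F. \<forall>h\<in>F. \<sigma> (g + h) q = \<sigma> g (\<sigma> h q)) \<and> (\<forall>g\<in>F. g \<noteq> 0 \<longrightarrow> \<sigma> g q \<noteq> q)"

lemma card_disagree_mult_less:
  assumes "m > 0" "L > 0" "hamming_dist m \<sigma> \<tau> < 1 / real L"
  shows "card {q\<in>{..<m}. \<sigma> q \<noteq> \<tau> q} * L < m"
proof -
  have "real (card {q\<in>{..<m}. \<sigma> q \<noteq> \<tau> q}) * real L < real m"
    using assms by (simp add: hamming_dist_def field_simps)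
  then show ?thesis by (simp flip: of_nat_mult)
qed

lemma card_fixed_points_mult_less:
  assumes "m > 0" "L > 0" "hamming_dist m \<sigma> id > 1 - 1 / real L"
  shows "card {q\<in>{..<m}. \<sigma> q = q} * L < m"
proof -
  let ?moved = "{q\<in>{..<m}. \<sigma> q \<noteq> q}" and ?fixed = "{q\<in>{..<m}. \<sigma> q = q}"
  have "card ?fixed + card ?moved = card (?fixed \<union> ?moved)"
    by (rule card_Un_disjoint[symmetric]) auto
  also have "?fixed \<union> ?moved = {..<m}"
    by auto
  finally have "real (card ?fixed) = real m - real (card ?moved)"
    by (simp flip: of_nat_add)
  then have "real (card ?fixed) * real L = real m * real L - real (card ?moved) * real L"
    by (simp add: left_diff_distrib)
  moreover have "real (card ?moved) * real L > real m * real L - real m"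
    using assms by (simp add: hamming_dist_def field_simps)
  ultimately have "real (card ?fixed) * real L < real m"
    by linarith
  then show ?thesis by (simp flip: of_nat_mult)
qed

lemma card_UN_mult_le:
  assumes "finite I" "\<And>i. i \<in> I \<Longrightarrow> card (B i) * L \<le> m"
  shows "card (\<Union>i\<in>I. B i) * L \<le> card I * m"
proof -
  have "card (\<Union>i\<in>I. B i) * L \<le> (\<Sum>i\<in>I. card (B i)) * L"
    using card_UN_le[OF assms(1), of B] by (rule mult_right_mono) simp
  also have "\<dots> \<le> card I * m"
    using sum_mono[of I "\<lambda>i. card (B i) * L" "\<lambda>_. m"] assms(2) by (simp add: sum_distrib_right)
  finally show ?thesis .
qed

lemma card_bad_points_mult_le:
  assumes "finite F" "m > 0" "L > 0"
    and hom: "\<forall>g\<in>F. \<forall>h\<in>F. hamming_dist m (\<sigma> (g + h)) (\<sigma> g \<circ> \<sigma> h) < 1 / real L"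
    and free: "\<forall>g\<in>F. g \<noteq> 0 \<longrightarrow> hamming_dist m (\<sigma> g) id > 1 - 1 / real L"
  shows "card {q\<in>{..<m}. \<not> good_point F \<sigma> q} * L \<le> (card F * card F + card F) * m"
proof -
  have moved: "card {q\<in>{..<m}. \<sigma> (g + h) q \<noteq> \<sigma> g (\<sigma> h q)} * L \<le> m" if "g \<in> F" "h \<in> F" for g h
    using that hom card_disagree_mult_less[OF assms(2,3), of "\<sigma> (g + h)" "\<sigma> g \<circ> \<sigma> h"] by auto
  have fixed: "card {q\<in>{..<m}. \<sigma> g q = q} * L \<le> m" if "g \<in> F - {0}" for g
    using that free card_fixed_points_mult_less[OF assms(2,3), of "\<sigma> g"] by auto
  let ?Bad = "{q\<in>{..<m}. \<not> good_point F \<sigma> q}"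
  let ?U1 = "\<Union>(g, h)\<in>F \<times> F. {q\<in>{..<m}. \<sigma> (g + h) q \<noteq> \<sigma> g (\<sigma> h q)}"
  let ?U2 = "\<Union>g\<in>F - {0}. {q\<in>{..<m}. \<sigma> g q = q}"
  have "?Bad \<subseteq> ?U1 \<union> ?U2"
    by (auto simp: good_point_def)
  moreover have "finite (?U1 \<union> ?U2)"
    by (rule finite_subset[of _ "{..<m}"]) auto
  ultimately have "card ?Bad \<le> card (?U1 \<union> ?U2)"
    by (rule card_mono[rotated])
  also have "\<dots> \<le> card ?U1 + card ?U2"
    by (rule card_Un_le)
  finally have "card ?Bad * L \<le> (card ?U1 + card ?U2) * L"
    by (rule mult_right_mono) simp
  also have "\<dots> = card ?U1 * L + card ?U2 * L"
    by (rule add_mult_distrib)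
  also have "\<dots> \<le> card (F \<times> F) * m + card (F - {0}) * m"
    using moved fixed assms(1) by (intro add_mono card_UN_mult_le) auto
  also have "\<dots> \<le> (card F * card F + card F) * m"
    using card_Diff1_le[of F 0] by (simp add: card_cartesian_product add_mult_distrib)
  finally show ?thesis .
qed

lemma sofic_good_points:
  fixes F :: "'g::group_add set"
  assumes "sofic TYPE('g)" "finite F"
  obtains m and \<sigma> :: "'g \<Rightarrow> nat \<Rightarrow> nat"
  where "\<And>g. \<sigma> g permutes {..<m}" "N * card {q\<in>{..<m}. \<not> good_point F \<sigma> q} < m"
proof -
  define K where "K = card F * card F + card F"
  define L where "L = N * K + 1"
  have "L > 0"
    by (simp add: L_def)
  then have "1 / real L > 0"
    by simp
  then obtain m \<sigma> where m: "m > 0" and perm: "\<forall>g. \<sigma> g permutes {..<m}"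
    and hom: "\<forall>g\<in>F. \<forall>h\<in>F. hamming_dist m (\<sigma> (g + h)) (\<sigma> g \<circ> \<sigma> h) < 1 / real L"
    and free: "\<forall>g\<in>F. g \<noteq> 0 \<longrightarrow> hamming_dist m (\<sigma> g) id > 1 - 1 / real L"
    using assms(1)[unfolded sofic_def, rule_format, of F "1 / real L"] assms(2) by auto
  define Bad where "Bad = {q\<in>{..<m}. \<not> good_point F \<sigma> q}"
  have "card Bad * L \<le> K * m"
    using card_bad_points_mult_le[OF assms(2) m \<open>L > 0\<close> hom free] by (simp add: Bad_def K_def)
  have "N * card Bad < m"
  proof (cases "card Bad = 0")
    case True
    with m show ?thesis by simp
  next
    case False
    have "card Bad * L = K * (N * card Bad) + card Bad"
      by (simp add: L_def algebra_simps)
    with \<open>card Bad * L \<le> K * m\<close> False have "K * (N * card Bad) < K * m"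
      by linarith
    then show ?thesis by simp
  qed
  with perm show thesis
    using that unfolding Bad_def by blast
qed

lemma good_point_zero:
  assumes "good_point F \<sigma> q" "0 \<in> F" "inj (\<sigma> 0)"
  shows "\<sigma> 0 q = q"
proof -
  have "\<sigma> 0 (\<sigma> 0 q) = \<sigma> 0 q"
    using assms(1,2) unfolding good_point_def by (metis add_0)
  then show ?thesis
    using assms(3) by (simp add: inj_eq)
qed

lemma mat_perm_rep_mult_at_good_point:
  fixes Y Z :: "('g::group_add \<Rightarrow>\<^sub>0 'd::semiring_0) mat"
  assumes "Y \<in> carrier_mat n n" "Z \<in> carrier_mat n n" "r < n" "s < n"
    and perm: "\<And>g. \<sigma> g permutes {..<m}" and "q < m" and good: "good_point F \<sigma> q"
    and keys: "\<And>t. t < n \<Longrightarrow> Poly_Mapping.keys (Y $$ (r, t)) \<union> Poly_Mapping.keys (Z $$ (t, s)) \<subseteq> F"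
  shows "(\<Sum>c\<in>{..<n} \<times> {..<m}. mat_perm_rep \<sigma> Y (r, p) c * mat_perm_rep \<sigma> Z c (s, q))
    = mat_perm_rep \<sigma> (Y * Z) (r, p) (s, q)"
proof (rule mat_perm_rep_mult[OF assms(1-4)])
  fix t g h
  assume "t < n" "g \<in> Poly_Mapping.keys (Y $$ (r, t))" "h \<in> Poly_Mapping.keys (Z $$ (t, s))"
  then have "g \<in> F" "h \<in> F"
    using keys by blast+
  then show "\<sigma> g (\<sigma> h q) = \<sigma> (g + h) q"
    using good by (simp add: good_point_def)
next
  show "\<sigma> h q < m" for h
    using perm \<open>q < m\<close> permutes_in_image by fastforce
qed

lemma good_point_separates:
  assumes "good_point F \<sigma> q" "inj (\<sigma> g)" "g \<in> F" "- g + g' \<in> F" "\<sigma> g q = \<sigma> g' q"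
  shows "g = g'"
proof (rule ccontr)
  assume "g \<noteq> g'"
  then have "- g + g' \<noteq> 0"
    by (metis add_minus_cancel add.right_neutral)
  then have "\<sigma> (- g + g') q \<noteq> q"
    using assms(1,4) by (simp add: good_point_def)
  moreover have "\<sigma> g (\<sigma> (- g + g') q) = \<sigma> g q"
    using assms(1,3-5) unfolding good_point_def by (metis add_minus_cancel)
  ultimately show False
    using assms(2) by (simp add: inj_eq)
qed

section \<open>Separated sets of points\<close>

lemma exists_independent_subset_bounded_degree:
  fixes R :: "'a \<Rightarrow> 'a \<Rightarrow> bool"
  assumes "finite W"
    and "\<And>q. finite {q'. R q q' \<or> R q' q}" "\<And>q. card {q'. R q q' \<or> R q' q} \<le> e"
  shows "\<exists>Q\<subseteq>W. (\<forall>q\<in>Q. \<forall>q'\<in>Q. q \<noteq> q' \<longrightarrow> \<not> R q q') \<and> card W \<le> (e + 1) * card Q"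
  using assms(1)
proof (induction "card W" arbitrary: W rule: less_induct)
  case less
  show ?case
  proof (cases "W = {}")
    case True
    then show ?thesis by auto
  next
    case False
    then obtain q where q: "q \<in> W" by auto
    define N where "N = {q'. R q q' \<or> R q' q}"
    define W' where "W' = W - insert q N"
    have "card W' < card W"
      unfolding W'_def using q less.prems by (intro psubset_card_mono) auto
    then obtain Q' where Q': "Q' \<subseteq> W'" "\<forall>q\<in>Q'. \<forall>q'\<in>Q'. q \<noteq> q' \<longrightarrow> \<not> R q q'"
      "card W' \<le> (e + 1) * card Q'"
      using less.hyps[of W'] less.prems by (auto simp: W'_def)
    have "card W \<le> card (W' \<union> insert q N)"
      using less.prems assms(2) by (intro card_mono) (auto simp: W'_def N_def)
    also have "\<dots> \<le> card W' + card (insert q N)"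
      by (rule card_Un_le)
    also have "\<dots> \<le> card W' + (e + 1)"
      using assms(2,3)[of q] by (simp add: card_insert_if N_def)
    finally have "card W \<le> card W' + (e + 1)" .
    moreover have "q \<notin> Q'" "finite Q'"
      using Q'(1) less.prems finite_subset by (auto simp: W'_def)
    ultimately show ?thesis
      using q Q' by (intro exI[of _ "insert q Q'"]) (auto simp: W'_def N_def)
  qed
qed

lemma exists_separated_subset:
  fixes \<sigma> :: "'g \<Rightarrow> nat \<Rightarrow> nat"
  assumes "finite W" "finite S" "\<And>g. inj (\<sigma> g)"
    and separates: "\<And>q g. q \<in> W \<Longrightarrow> g \<in> S \<Longrightarrow> \<sigma> g q = \<sigma> g0 q \<Longrightarrow> g = g0"
  obtains Q where "Q \<subseteq> W"
    and "\<And>q q' g. q \<in> Q \<Longrightarrow> q' \<in> Q \<Longrightarrow> g \<in> S \<Longrightarrow> \<sigma> g q' = \<sigma> g0 q \<Longrightarrow> q' = q \<and> g = g0"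
    and "card W \<le> (2 * card S + 1) * card Q"
proof -
  define R where "R q q' \<longleftrightarrow> (\<exists>g\<in>S. \<sigma> g q' = \<sigma> g0 q)" for q q'
  define T where "T q = (\<lambda>g. inv_into UNIV (\<sigma> g) (\<sigma> g0 q)) ` S \<union> (\<lambda>g. inv_into UNIV (\<sigma> g0) (\<sigma> g q)) ` S"
    for q
  have nbhd: "{q'. R q q' \<or> R q' q} \<subseteq> T q" for q
  proof
    fix q' assume "q' \<in> {q'. R q q' \<or> R q' q}"
    then obtain g where "g \<in> S" "\<sigma> g q' = \<sigma> g0 q \<or> \<sigma> g q = \<sigma> g0 q'"
      by (auto simp: R_def)
    then show "q' \<in> T q"
      using inv_f_f[OF assms(3)[of g], of q'] inv_f_f[OF assms(3)[of g0], of q'] unfolding T_def by force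
  qed
  have "finite (T q)" for q
    using assms(2) by (simp add: T_def)
  then have "finite {q'. R q q' \<or> R q' q}" for q
    using finite_subset[OF nbhd] by blast
  moreover have "card {q'. R q q' \<or> R q' q} \<le> 2 * card S" for q
  proof -
    have "card {q'. R q q' \<or> R q' q} \<le> card (T q)"
      using nbhd \<open>finite (T q)\<close> by (rule card_mono[rotated])
    also have "\<dots> \<le> card S + card S"
      unfolding T_def using card_Un_le card_image_le[OF assms(2)] by (meson add_mono order_trans)
    finally show ?thesis by simp
  qed
  ultimately have "\<exists>Q\<subseteq>W. (\<forall>q\<in>Q. \<forall>q'\<in>Q. q \<noteq> q' \<longrightarrow> \<not> R q q') \<and> card W \<le> (2 * card S + 1) * card Q"
    by (rule exists_independent_subset_bounded_degree[OF assms(1)])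
  then obtain Q where Q: "Q \<subseteq> W" "\<forall>q\<in>Q. \<forall>q'\<in>Q. q \<noteq> q' \<longrightarrow> \<not> R q q'"
      "card W \<le> (2 * card S + 1) * card Q"
    by auto
  show thesis
  proof (rule that[OF Q(1) _ Q(3)])
    fix q q' g assume "q \<in> Q" "q' \<in> Q" "g \<in> S" "\<sigma> g q' = \<sigma> g0 q"
    moreover from this have "q' = q"
      using Q(2) unfolding R_def by metis
    ultimately show "q' = q \<and> g = g0"
      using separates Q(1) by blast
  qed
qed

lemma minus_mat_eq_0_iff:
  fixes A B :: "'a::group_add mat"
  assumes "A \<in> carrier_mat nr nc" "B \<in> carrier_mat nr nc"
  shows "A - B = 0\<^sub>m nr nc \<longleftrightarrow> A = B"
proof
  assume "A - B = 0\<^sub>m nr nc"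
  then have "A $$ (i, j) = B $$ (i, j)" if "i < nr" "j < nc" for i j
    using that assms by (metis carrier_matD index_minus_mat(1) index_zero_mat(1) right_minus_eq)
  then show "A = B"
    using assms by (intro eq_matI) auto
qed (use assms in simp)

lemma rep_columns_card_le:
  fixes A B X :: "('g::group_add \<Rightarrow>\<^sub>0 'd::division_ring) mat"
  assumes A: "A \<in> carrier_mat n n" and B: "B \<in> carrier_mat n n" and X: "X \<in> carrier_mat n n"
    and AB: "A * B = 1\<^sub>m n" and AX: "A * X = 0\<^sub>m n n"
    and perm: "\<And>g. \<sigma> g permutes {..<m}"
    and good: "\<And>q. q \<in> Good \<Longrightarrow> q < m \<and> good_point F \<sigma> q"
    and keys: "\<And>r s. r < n \<Longrightarrow> s < n \<Longrightarrow>
      Poly_Mapping.keys (A $$ (r, s)) \<union> Poly_Mapping.keys (B $$ (r, s)) \<union> Poly_Mapping.keys (X $$ (r, s)) \<subseteq> F"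
    and "0 \<in> F"
    and rs: "r0 < n" "s0 < n" and g0: "g0 \<in> Poly_Mapping.keys (X $$ (r0, s0))"
    and "Q \<subseteq> Good"
    and unique: "\<And>q q' g. q \<in> Q \<Longrightarrow> q' \<in> Q \<Longrightarrow> g \<in> Poly_Mapping.keys (X $$ (r0, s0)) \<Longrightarrow>
      \<sigma> g q' = \<sigma> g0 q \<Longrightarrow> q' = q \<and> g = g0"
  shows "n * card Good + card Q \<le> n * m"
proof -
  define C where "C = {..<n} \<times> {..<m}"
  define K1 :: "(nat + nat \<times> nat) set" where "K1 = Inr ` ({..<n} \<times> Good)"
  define K2 :: "(nat + nat \<times> nat) set" where "K2 = Inl ` Q"
  define v where "v k c = (case k of Inl q \<Rightarrow> mat_perm_rep \<sigma> X c (s0, q) | Inr j \<Rightarrow> mat_perm_rep \<sigma> B c j)"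
    for k c
  have "Good \<subseteq> {..<m}"
    using good by blast
  then have fin: "finite Good" "finite Q"
    using \<open>Q \<subseteq> Good\<close> by (meson finite_lessThan finite_subset)+
  have rep_mult: "(\<Sum>c\<in>C. mat_perm_rep \<sigma> A (r, p) c * mat_perm_rep \<sigma> Z c (s, q))
      = mat_perm_rep \<sigma> (A * Z) (r, p) (s, q)"
    if "Z = B \<or> Z = X" "r < n" "s < n" "q \<in> Good" for Z r p s q
    unfolding C_def using that A B X keys good[OF \<open>q \<in> Good\<close>]
    by (intro mat_perm_rep_mult_at_good_point[OF A _ _ _ perm]) blast+
  have image_K1: "(\<Sum>c\<in>C. mat_perm_rep \<sigma> A i c * v (Inr j) c) = (1 when i = j)"
    if iC: "i \<in> C" and jG: "j \<in> {..<n} \<times> Good" for i j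
  proof -
    obtain r p where i: "i = (r, p)" "r < n"
      using iC by (auto simp: C_def)
    obtain t q where j: "j = (t, q)" "t < n" "q \<in> Good"
      using jG by auto
    have "\<sigma> 0 q = q"
      using good_point_zero[OF conjunct2[OF good[OF j(3)]] \<open>0 \<in> F\<close> permutes_inj[OF perm]] .
    then show ?thesis
      using rep_mult[of B r t q p] i j by (simp add: v_def AB mat_perm_rep_one)
  qed
  have image_K2: "(\<Sum>c\<in>C. mat_perm_rep \<sigma> A i c * v k c) = 0" if "i \<in> C" "k \<in> K2" for i k
    using that rep_mult[of X "fst i" s0 _ "snd i"] rs \<open>Q \<subseteq> Good\<close>
    by (auto simp: C_def K2_def v_def AX mat_perm_rep_def)
  have X_column: "v (Inl q') (r0, \<sigma> g0 q) = (Poly_Mapping.lookup (X $$ (r0, s0)) g0 when q' = q)"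
    if "q \<in> Q" "q' \<in> Q" for q q'
    using unique[OF that] g0 by (simp add: v_def mat_perm_rep_def perm_rep_private_point)
  have "independent_columns C K1 (\<lambda>k i. \<Sum>c\<in>C. mat_perm_rep \<sigma> A i c * v k c)"
  proof (rule independent_columns_diagonal)
    show "finite K1"
      using fin by (simp add: K1_def)
    fix k assume "k \<in> K1"
    then obtain j where "k = Inr j" "j \<in> {..<n} \<times> Good"
      by (auto simp: K1_def)
    moreover have "j \<in> C"
      using calculation(2) \<open>Good \<subseteq> {..<m}\<close> by (auto simp: C_def)
    ultimately show "\<exists>i\<in>C. (\<Sum>c\<in>C. mat_perm_rep \<sigma> A i c * v k c) \<noteq> 0 \<and>
        (\<forall>k'\<in>K1. k' \<noteq> k \<longrightarrow> (\<Sum>c\<in>C. mat_perm_rep \<sigma> A i c * v k' c) = 0)"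
      by (intro bexI[of _ j]) (auto simp: K1_def image_K1)
  qed
  moreover have "independent_columns C K2 v"
  proof (rule independent_columns_diagonal)
    show "finite K2"
      using fin by (simp add: K2_def)
    fix k assume "k \<in> K2"
    then obtain q where q: "k = Inl q" "q \<in> Q"
      by (auto simp: K2_def)
    moreover have "(r0, \<sigma> g0 q) \<in> C"
      using q(2) \<open>Q \<subseteq> Good\<close> good perm permutes_in_image rs(1) by (fastforce simp: C_def)
    ultimately show "\<exists>c\<in>C. v k c \<noteq> 0 \<and> (\<forall>k'\<in>K2. k' \<noteq> k \<longrightarrow> v k' c = 0)"
      using g0 by (intro bexI[of _ "(r0, \<sigma> g0 q)"]) (auto simp: K2_def X_column in_keys_iff)
  qed
  ultimately have "independent_columns C (K1 \<union> K2) v"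
    using fin image_K2 by (intro independent_columns_Un) (auto simp: C_def K1_def K2_def)
  then have "card (K1 \<union> K2) \<le> card C"
    using fin by (intro independent_columns_card_le) (auto simp: C_def K1_def K2_def)
  moreover have "card (K1 \<union> K2) = n * card Good + card Q"
    using fin by (subst card_Un_disjoint) (auto simp: K1_def K2_def card_image card_cartesian_product)
  ultimately show ?thesis
    by (simp add: C_def card_cartesian_product)
qed

lemma sofic_right_invertible_mat_annihilator_eq_zero:
  fixes A B X :: "('g::group_add \<Rightarrow>\<^sub>0 'd::division_ring) mat"
  assumes sofic: "sofic TYPE('g)"
    and A: "A \<in> carrier_mat n n" and B: "B \<in> carrier_mat n n" and X: "X \<in> carrier_mat n n"
    and AB: "A * B = 1\<^sub>m n" and AX: "A * X = 0\<^sub>m n n"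
  shows "X = 0\<^sub>m n n"
proof (rule ccontr)
  assume "X \<noteq> 0\<^sub>m n n"
  then obtain r0 s0 where rs: "r0 < n" "s0 < n" "X $$ (r0, s0) \<noteq> 0"
    using X by (metis eq_matI carrier_matD index_zero_mat(1-3))
  define S where "S = Poly_Mapping.keys (X $$ (r0, s0))"
  obtain g0 where g0: "g0 \<in> S"
    using rs(3) by (auto simp: S_def simp flip: keys_eq_empty)
  define F where "F = (\<Union>r<n. \<Union>s<n. Poly_Mapping.keys (A $$ (r, s)) \<union> Poly_Mapping.keys (B $$ (r, s))
    \<union> Poly_Mapping.keys (X $$ (r, s))) \<union> insert 0 ((\<lambda>g. - g + g0) ` S)"
  have "finite F" "finite S"
    by (simp_all add: F_def S_def)
  obtain m \<sigma> where perm: "\<And>g. \<sigma> g permutes {..<m}"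
    and few_bad: "(n * (2 * card S + 1) + 1) * card {q\<in>{..<m}. \<not> good_point F \<sigma> q} < m"
    using sofic_good_points[OF sofic \<open>finite F\<close>] by blast
  define Good where "Good = {q\<in>{..<m}. good_point F \<sigma> q}"
  define Bad where "Bad = {q\<in>{..<m}. \<not> good_point F \<sigma> q}"
  have "finite Good"
    by (simp add: Good_def)
  have inj: "\<And>g. inj (\<sigma> g)"
    using perm permutes_inj by blast
  have separates: "g = g0" if "q \<in> Good" "g \<in> S" "\<sigma> g q = \<sigma> g0 q" for q g
  proof -
    have "g \<in> F" "- g + g0 \<in> F"
      using that(2) rs(1,2) by (auto simp: F_def S_def)
    then show ?thesis
      using good_point_separates[of F \<sigma> q g g0] inj that by (auto simp: Good_def)
  qed
  obtain Q where "Q \<subseteq> Good"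
    and unique: "\<And>q q' g. q \<in> Q \<Longrightarrow> q' \<in> Q \<Longrightarrow> g \<in> S \<Longrightarrow> \<sigma> g q' = \<sigma> g0 q \<Longrightarrow> q' = q \<and> g = g0"
    and many: "card Good \<le> (2 * card S + 1) * card Q"
    using exists_separated_subset[of Good S \<sigma> g0] \<open>finite Good\<close> \<open>finite S\<close> inj separates by blast
  have "n * card Good + card Q \<le> n * m"
    using rs g0 \<open>Q \<subseteq> Good\<close> unique unfolding S_def
    by (intro rep_columns_card_le[OF A B X AB AX perm]) (auto simp: Good_def F_def)
  moreover have "card Good + card Bad = m"
  proof -
    have "card Good + card Bad = card (Good \<union> Bad)"
      by (rule card_Un_disjoint[symmetric]) (auto simp: Good_def Bad_def)
    also have "Good \<union> Bad = {..<m}"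
      by (auto simp: Good_def Bad_def)
    finally show ?thesis
      by simp
  qed
  ultimately have "card Q \<le> n * card Bad"
    by (metis add_le_cancel_left add_mult_distrib2)
  then have "card Good \<le> (2 * card S + 1) * (n * card Bad)"
    using many by (meson le_trans mult_le_mono2)
  then have "m \<le> (n * (2 * card S + 1) + 1) * card Bad"
    using \<open>card Good + card Bad = m\<close> by (simp add: algebra_simps)
  with few_bad show False
    by (simp add: Bad_def)
qed

theorem mainTheorem2:
  fixes A B :: "('g::group_add \<Rightarrow>\<^sub>0 'd::division_ring) mat" and n :: nat
  assumes "sofic TYPE('g)"
    and "n \<ge> 1"
    and "A \<in> carrier_mat n n" and "B \<in> carrier_mat n n"
    and "A * B = 1\<^sub>m n"
  shows "B * A = 1\<^sub>m n"
proof -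
  note A = assms(3) and B = assms(4)
  have BA: "B * A \<in> carrier_mat n n"
    using A B by simp
  have "A * (1\<^sub>m n - B * A) = A * 1\<^sub>m n - A * (B * A)"
    by (rule mult_minus_distrib_mat[OF A one_carrier_mat BA])
  also have "\<dots> = 0\<^sub>m n n"
    using A B assms(5) by (simp add: assoc_mult_mat[symmetric])
  finally have "1\<^sub>m n - B * A = 0\<^sub>m n n"
    by (rule sofic_right_invertible_mat_annihilator_eq_zero[OF assms(1) A B minus_carrier_mat[OF BA] assms(5)])
  then show ?thesis
    using BA by (simp add: minus_mat_eq_0_iff)
qed

end
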